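(* The profinite completion $\widehat{\mathbb{N}}$ of $(\mathbb{N},+)$ is isomorphic, as a semigroup, to $(\mathbb{N} \cup \widehat{\mathbb{Z}}, \widehat{+})$, where $\mathbb{N}$ and $\widehat{\mathbb{Z}}$ are taken disjoint and $$a \,\widehat{+}\, b = \begin{cases} a + b \in \mathbb{N} & \text{if } a, b \in \mathbb{N},\\ a + b \in \widehat{\mathbb{Z}} & \text{otherwise},\end{cases}$$ where in the second case elements of $\mathbb{N}$ are mapped into $\widehat{\mathbb{Z}}$ by the natural embedding.
   Context: $\mathbb{N} = \{1,2,3,\dots\}$ and $\widehat{\mathbb{Z}} = \varprojlim_n \mathbb{Z}/n\mathbb{Z}$. For positive integers $m, n$, let $\mathbb{Z}_{m,n}$ be the semigroup with underlying set $\{1, \dots, m-1\} \sqcup \mathbb{Z}/n\mathbb{Z}$ and operation $a \dotplus b = a + b \in \{1,\dots,m-1\}$ if $a, b \in \{1,\dots,m-1\}$ and $a+b < m$, and $a \dotplus b = \overline{a+b} \in \mathbb{Z}/n\mathbb{Z}$ otherwise; the quotient map $\pi_{m,n} : \mathbb{N} \to \mathbb{Z}_{m,n}$ sends $a$ to $a$ if $a < m$ and to $\overline{a} \in \mathbb{Z}/n\mathbb{Z}$ if $a \ge m$. (Every finite quotient semigroup of $(\mathbb{N},+)$ is isomorphic to some $\mathbb{Z}_{m,n}$.) If $m \le k$ and $n \mid l$ there is a natural homomorphism $\phi_{(k,l),(m,n)} : \mathbb{Z}_{k,l} \to \mathbb{Z}_{m,n}$ compatible with the quotient maps. The profinite completion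 $\widehat{\mathbb{N}}$ is defined as the projective limit of the system $(\mathbb{Z}_{m,n}, \phi_{(k,l),(m,n)})$. *)

theory Defs
  imports Main
begin

text \<open>An element of Z_{m,n} (m, n >= 1) is represented as Inl a for a in {1..m-1},
  or Inr r for the residue class r mod n, with 0 <= r < n.\<close>

definition zmn_carrier :: "nat \<Rightarrow> nat \<Rightarrow> (nat + nat) set" where
  "zmn_carrier m n = Inl ` {1..<m} \<union> Inr ` {..<n}"

fun zmn_val :: "nat + nat \<Rightarrow> nat" where
  "zmn_val (Inl a) = a"
| "zmn_val (Inr r) = r"

definition zmn_add :: "nat \<Rightarrow> nat \<Rightarrow> nat + nat \<Rightarrow> nat + nat \<Rightarrow> nat + nat" where
  "zmn_add m n a b =
     (case (a, b) of
        (Inl x, Inl y) \<Rightarrow> (if x + y < m then Inl (x + y) else Inr ((x + y) mod n))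
      | _ \<Rightarrow> Inr ((zmn_val a + zmn_val b) mod n))"

definition zmn_pi :: "nat \<Rightarrow> nat \<Rightarrow> nat \<Rightarrow> nat + nat" where
  "zmn_pi m n a = (if a < m then Inl a else Inr (a mod n))"

fun zmn_phi :: "nat \<Rightarrow> nat \<Rightarrow> nat \<Rightarrow> nat \<Rightarrow> nat + nat \<Rightarrow> nat + nat" where
  "zmn_phi k l m n (Inl a) = zmn_pi m n a"
| "zmn_phi k l m n (Inr r) = Inr (r mod n)"

text \<open>Elements are compatible families x m n in Z_{m,n}, indexed by m, n >= 1;
  values at indices outside the index set are fixed to Inl 0.\<close>
definition nhat_carrier :: "(nat \<Rightarrow> nat \<Rightarrow> nat + nat) set" where
  "nhat_carrier = {x.
     (\<forall>m n. (1 \<le> m \<and> 1 \<le> n \<longrightarrow> x m n \<in> zmn_carrier m n) \<and>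
            (\<not> (1 \<le> m \<and> 1 \<le> n) \<longrightarrow> x m n = Inl 0)) \<and>
     (\<forall>m n k l. 1 \<le> m \<longrightarrow> m \<le> k \<longrightarrow> 1 \<le> n \<longrightarrow> 1 \<le> l \<longrightarrow> n dvd l \<longrightarrow>
            x m n = zmn_phi k l m n (x k l))}"

definition nhat_add :: "(nat \<Rightarrow> nat \<Rightarrow> nat + nat) \<Rightarrow> (nat \<Rightarrow> nat \<Rightarrow> nat + nat) \<Rightarrow> (nat \<Rightarrow> nat \<Rightarrow> nat + nat)" where
  "nhat_add x y = (\<lambda>m n. if 1 \<le> m \<and> 1 \<le> n then zmn_add m n (x m n) (y m n) else Inl 0)"

text \<open>Elements are compatible families z n in Z/nZ (represented by 0 <= z n < n), n >= 1;
  z 0 = 0 by convention.\<close>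
definition zhat_carrier :: "(nat \<Rightarrow> nat) set" where
  "zhat_carrier = {z. z 0 = 0 \<and> (\<forall>n. 1 \<le> n \<longrightarrow> z n < n) \<and>
     (\<forall>m n. 1 \<le> m \<longrightarrow> 1 \<le> n \<longrightarrow> m dvd n \<longrightarrow> z m = z n mod m)}"

definition zhat_add :: "(nat \<Rightarrow> nat) \<Rightarrow> (nat \<Rightarrow> nat) \<Rightarrow> (nat \<Rightarrow> nat)" where
  "zhat_add z w = (\<lambda>n. if n = 0 then 0 else (z n + w n) mod n)"

definition zhat_of_nat :: "nat \<Rightarrow> (nat \<Rightarrow> nat)" where
  "zhat_of_nat a = (\<lambda>n. if n = 0 then 0 else a mod n)"

definition nz_carrier :: "(nat + (nat \<Rightarrow> nat)) set" where
  "nz_carrier = Inl ` {1..} \<union> Inr ` zhat_carrier"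

fun nz_to_zhat :: "nat + (nat \<Rightarrow> nat) \<Rightarrow> (nat \<Rightarrow> nat)" where
  "nz_to_zhat (Inl a) = zhat_of_nat a"
| "nz_to_zhat (Inr z) = z"

definition nz_add :: "nat + (nat \<Rightarrow> nat) \<Rightarrow> nat + (nat \<Rightarrow> nat) \<Rightarrow> nat + (nat \<Rightarrow> nat)" where
  "nz_add a b =
     (case (a, b) of
        (Inl x, Inl y) \<Rightarrow> Inl (x + y)
      | _ \<Rightarrow> Inr (zhat_add (nz_to_zhat a) (nz_to_zhat b)))"

end

theory Submission
  imports Defs
begin

text \<open>Sending a natural number a to the family of its images pi_{m,n}(a), and a profinite
  integer z to the family of its residues z_n, embeds the disjoint union of N and Zhat into the
  projective limit; the embedding is additive because the quotient maps pi_{m,n} and the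
  reductions mod n are. It is onto: if some component x_{k,l} of a compatible family x is a
  natural number a < k, then passing through the common refinement (max k m, l n) shows
  x_{m,n} = pi_{m,n}(a) for all m, n; otherwise all components are residues, they do not depend
  on m, and they form a profinite integer.\<close>

lemma zmn_pi_in_carrier: "1 \<le> a \<Longrightarrow> 1 \<le> n \<Longrightarrow> zmn_pi m n a \<in> zmn_carrier m n"
  by (simp add: zmn_pi_def zmn_carrier_def)

lemma zmn_add_Inr_pi: "1 \<le> n \<Longrightarrow> zmn_add m n (Inr r) (zmn_pi m n a) = Inr ((r + a) mod n)"
  by (simp add: zmn_pi_def zmn_add_def mod_add_right_eq)

lemma zmn_add_pi_Inr: "1 \<le> n \<Longrightarrow> zmn_add m n (zmn_pi m n a) (Inr r) = Inr ((a + r) mod n)"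
  by (simp add: zmn_pi_def zmn_add_def mod_add_left_eq)

lemma zmn_pi_add:
  assumes n: "1 \<le> n"
  shows "zmn_pi m n (a + b) = zmn_add m n (zmn_pi m n a) (zmn_pi m n b)"
proof (cases "a < m \<and> b < m")
  case True
  then show ?thesis by (simp add: zmn_pi_def zmn_add_def)
next
  case False
  then have "zmn_pi m n a = Inr (a mod n) \<or> zmn_pi m n b = Inr (b mod n)"
    by (auto simp: zmn_pi_def)
  then show ?thesis
    using False zmn_add_Inr_pi[OF n, of m "a mod n" b] zmn_add_pi_Inr[OF n, of m a "b mod n"]
    by (auto simp: zmn_pi_def[of m n "a + b"] mod_add_left_eq mod_add_right_eq)
qed

lemma zmn_phi_pi: "m \<le> k \<Longrightarrow> n dvd l \<Longrightarrow> zmn_phi k l m n (zmn_pi k l a) = zmn_pi m n a"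
  by (cases "a < k") (simp_all add: zmn_pi_def mod_mod_cancel)

lemma zhat_carrierD:
  assumes "z \<in> zhat_carrier"
  shows "z 0 = 0" and "1 \<le> n \<Longrightarrow> z n < n"
    and "1 \<le> m \<Longrightarrow> 1 \<le> n \<Longrightarrow> m dvd n \<Longrightarrow> z m = z n mod m"
  using assms unfolding zhat_carrier_def by blast+

lemma zhat_of_nat_in_carrier: "zhat_of_nat a \<in> zhat_carrier"
  by (auto simp: zhat_carrier_def zhat_of_nat_def mod_mod_cancel)

lemma zhat_add_closed:
  assumes z: "z \<in> zhat_carrier" and w: "w \<in> zhat_carrier"
  shows "zhat_add z w \<in> zhat_carrier"
  unfolding zhat_carrier_def
proof (intro CollectI conjI allI impI)
  fix m n :: nat assume mn: "1 \<le> m" "1 \<le> n" "m dvd n"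
  have "(z m + w m) mod m = (z n + w n) mod m"
    using zhat_carrierD(3)[OF z mn] zhat_carrierD(3)[OF w mn] by (simp add: mod_add_eq)
  then show "zhat_add z w m = zhat_add z w n mod m"
    using mn by (simp add: zhat_add_def mod_mod_cancel)
qed (simp_all add: zhat_add_def)

lemma nz_to_zhat_in_carrier: "u \<in> nz_carrier \<Longrightarrow> nz_to_zhat u \<in> zhat_carrier"
  by (auto simp: nz_carrier_def zhat_of_nat_in_carrier)

lemma nz_add_closed:
  assumes u: "u \<in> nz_carrier" and v: "v \<in> nz_carrier"
  shows "nz_add u v \<in> nz_carrier"
proof (cases "\<exists>a b. u = Inl a \<and> v = Inl b")
  case True
  then show ?thesis using u v by (auto simp: nz_carrier_def nz_add_def)
next
  case False
  then have "nz_add u v = Inr (zhat_add (nz_to_zhat u) (nz_to_zhat v))"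
    by (cases u; cases v) (auto simp: nz_add_def)
  then show ?thesis
    using zhat_add_closed[OF nz_to_zhat_in_carrier[OF u] nz_to_zhat_in_carrier[OF v]]
    by (simp add: nz_carrier_def)
qed

lemma nhat_carrierD:
  assumes "x \<in> nhat_carrier"
  shows "1 \<le> m \<Longrightarrow> 1 \<le> n \<Longrightarrow> x m n \<in> zmn_carrier m n"
    and "\<not> (1 \<le> m \<and> 1 \<le> n) \<Longrightarrow> x m n = Inl 0"
    and "1 \<le> m \<Longrightarrow> m \<le> k \<Longrightarrow> 1 \<le> n \<Longrightarrow> 1 \<le> l \<Longrightarrow> n dvd l \<Longrightarrow> x m n = zmn_phi k l m n (x k l)"
  using assms unfolding nhat_carrier_def by blast+

lemma nhat_carrierI:
  assumes "\<And>m n. 1 \<le> m \<Longrightarrow> 1 \<le> n \<Longrightarrow> x m n \<in> zmn_carrier m n"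
    and "\<And>m n. \<not> (1 \<le> m \<and> 1 \<le> n) \<Longrightarrow> x m n = Inl 0"
    and "\<And>m n k l. 1 \<le> m \<Longrightarrow> m \<le> k \<Longrightarrow> 1 \<le> n \<Longrightarrow> 1 \<le> l \<Longrightarrow> n dvd l \<Longrightarrow>
      x m n = zmn_phi k l m n (x k l)"
  shows "x \<in> nhat_carrier"
  using assms unfolding nhat_carrier_def by blast

definition nz_to_zmn :: "nat \<Rightarrow> nat \<Rightarrow> nat + (nat \<Rightarrow> nat) \<Rightarrow> nat + nat" where
  "nz_to_zmn m n u = (case u of Inl a \<Rightarrow> zmn_pi m n a | Inr z \<Rightarrow> Inr (z n))"

definition nhat_of_nz :: "nat + (nat \<Rightarrow> nat) \<Rightarrow> nat \<Rightarrow> nat \<Rightarrow> nat + nat" where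
  "nhat_of_nz u = (\<lambda>m n. if 1 \<le> m \<and> 1 \<le> n then nz_to_zmn m n u else Inl 0)"

lemma nz_to_zmn_add:
  assumes n: "1 \<le> n"
  shows "nz_to_zmn m n (nz_add u v) = zmn_add m n (nz_to_zmn m n u) (nz_to_zmn m n v)"
proof (cases u; cases v)
  fix a b assume "u = Inl a" "v = Inl b"
  then show ?thesis by (simp add: nz_to_zmn_def nz_add_def zmn_pi_add[OF n])
next
  fix a w assume "u = Inl a" "v = Inr w"
  with n show ?thesis
    by (simp add: nz_to_zmn_def nz_add_def zhat_add_def zhat_of_nat_def zmn_add_pi_Inr[OF n]
        mod_add_left_eq)
next
  fix z b assume "u = Inr z" "v = Inl b"
  with n show ?thesis
    by (simp add: nz_to_zmn_def nz_add_def zhat_add_def zhat_of_nat_def zmn_add_Inr_pi[OF n]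
        mod_add_right_eq)
next
  fix z w assume "u = Inr z" "v = Inr w"
  with n show ?thesis by (simp add: nz_to_zmn_def nz_add_def zhat_add_def zmn_add_def)
qed

lemma nhat_of_nz_add: "nhat_of_nz (nz_add u v) = nhat_add (nhat_of_nz u) (nhat_of_nz v)"
  by (intro ext) (simp add: nhat_of_nz_def nhat_add_def nz_to_zmn_add)

lemma nz_to_zmn_in_carrier:
  "u \<in> nz_carrier \<Longrightarrow> 1 \<le> n \<Longrightarrow> nz_to_zmn m n u \<in> zmn_carrier m n"
  by (cases u) (auto simp: nz_carrier_def nz_to_zmn_def zmn_pi_in_carrier,
      auto simp: zmn_carrier_def dest: zhat_carrierD(2))

lemma zmn_phi_nz_to_zmn:
  assumes "u \<in> nz_carrier" "m \<le> k" "1 \<le> n" "1 \<le> l" "n dvd l"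
  shows "zmn_phi k l m n (nz_to_zmn k l u) = nz_to_zmn m n u"
  using assms
  by (auto simp: nz_carrier_def nz_to_zmn_def zmn_phi_pi dest: zhat_carrierD(3)[of _ n l])

lemma nhat_of_nz_in_carrier: "u \<in> nz_carrier \<Longrightarrow> nhat_of_nz u \<in> nhat_carrier"
  by (rule nhat_carrierI) (auto simp: nhat_of_nz_def nz_to_zmn_in_carrier zmn_phi_nz_to_zmn)

lemma inj_on_nhat_of_nz: "inj_on nhat_of_nz nz_carrier"
proof (rule inj_onI)
  fix u v assume u: "u \<in> nz_carrier" and v: "v \<in> nz_carrier"
    and eq: "nhat_of_nz u = nhat_of_nz v"
  have "nz_to_zmn m n u = nz_to_zmn m n v" if "1 \<le> m" "1 \<le> n" for m n
    using fun_cong[OF fun_cong[OF eq, of m], of n] that by (simp add: nhat_of_nz_def)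
  note component_eq = this
  \<comment> \<open>Z_{m,1} collapses Zhat to a point but still sees every natural number below m.\<close>
  show "u = v"
  proof (cases u; cases v)
    fix a b assume "u = Inl a" "v = Inl b"
    then show ?thesis using component_eq[of "a + b + 1" 1] by (simp add: nz_to_zmn_def zmn_pi_def)
  next
    fix a w assume "u = Inl a" "v = Inr w"
    then show ?thesis using component_eq[of "a + 1" 1] by (simp add: nz_to_zmn_def zmn_pi_def)
  next
    fix z b assume "u = Inr z" "v = Inl b"
    then show ?thesis using component_eq[of "b + 1" 1] by (simp add: nz_to_zmn_def zmn_pi_def)
  next
    fix z w assume uz: "u = Inr z" and vw: "v = Inr w"
    with u v have "z \<in> zhat_carrier" "w \<in> zhat_carrier" by (auto simp: nz_carrier_def)
    then have "z n = w n" for n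
      using component_eq[of 1 n] uz vw zhat_carrierD(1)[of z] zhat_carrierD(1)[of w]
      by (cases "n = 0") (auto simp: nz_to_zmn_def)
    then show ?thesis using uz vw by auto
  qed
qed

lemma nhat_eq_of_nat_if_Inl_component:
  assumes x: "x \<in> nhat_carrier" and kl: "1 \<le> k" "1 \<le> l" and xa: "x k l = Inl a"
  shows "x = nhat_of_nz (Inl a)"
proof (intro ext)
  fix m n
  show "x m n = nhat_of_nz (Inl a) m n"
  proof (cases "1 \<le> m \<and> 1 \<le> n")
    case False
    then show ?thesis using nhat_carrierD(2)[OF x False] False by (auto simp: nhat_of_nz_def)
  next
    case mn: True
    define K where "K = max k m"
    define L where "L = l * n"
    have "1 \<le> L" using kl mn by (simp add: L_def)
    then have through_KL: "x k l = zmn_phi K L k l (x K L)" "x m n = zmn_phi K L m n (x K L)"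
      using nhat_carrierD(3)[OF x] kl mn by (auto simp: K_def L_def)
    then obtain b where b: "x K L = Inl b"
      using xa by (cases "x K L") auto
    then have "b = a"
      using through_KL(1) xa by (simp add: zmn_pi_def split: if_splits)
    then show ?thesis
      using through_KL(2) b mn by (simp add: nhat_of_nz_def nz_to_zmn_def)
  qed
qed

lemma nhat_eq_of_zhat_if_no_Inl_component:
  assumes x: "x \<in> nhat_carrier" and no_Inl: "\<And>k l a. 1 \<le> k \<Longrightarrow> 1 \<le> l \<Longrightarrow> x k l \<noteq> Inl a"
  shows "\<exists>z\<in>zhat_carrier. x = nhat_of_nz (Inr z)"
proof -
  define z where "z n = (if n = 0 then 0 else zmn_val (x 1 n))" for n
  have residue: "\<exists>r. x m n = Inr r \<and> r < n" if "1 \<le> m" "1 \<le> n" for m n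
    using nhat_carrierD(1)[OF x that] no_Inl[OF that] by (auto simp: zmn_carrier_def)
  have x_eq: "x m n = Inr (z n)" if m: "1 \<le> m" and n: "1 \<le> n" for m n
  proof -
    obtain r where r: "x m n = Inr r" using residue[OF m n] by blast
    have "x 1 n = zmn_phi m n 1 n (x m n)" using nhat_carrierD(3)[OF x, of 1 m n n] m n by simp
    then show ?thesis using r residue[OF m n] n by (simp add: z_def)
  qed
  have "z \<in> zhat_carrier"
    unfolding zhat_carrier_def
  proof (intro CollectI conjI allI impI)
    fix n :: nat assume "1 \<le> n"
    then show "z n < n" using residue[of 1 n] by (auto simp: z_def)
  next
    fix m n :: nat assume mn: "1 \<le> m" "1 \<le> n" "m dvd n"
    then have "x 1 m = zmn_phi 1 n 1 m (x 1 n)" using nhat_carrierD(3)[OF x, of 1 1 m n] by simp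
    then show "z m = z n mod m" using x_eq[of 1 m] x_eq[of 1 n] mn by simp
  qed (simp add: z_def)
  moreover have "x = nhat_of_nz (Inr z)"
    using nhat_carrierD(2)[OF x] x_eq by (intro ext) (auto simp: nhat_of_nz_def nz_to_zmn_def)
  ultimately show ?thesis by blast
qed

lemma nhat_carrier_subset_image: "nhat_carrier \<subseteq> nhat_of_nz ` nz_carrier"
proof
  fix x assume x: "x \<in> nhat_carrier"
  show "x \<in> nhat_of_nz ` nz_carrier"
  proof (cases "\<exists>k l a. 1 \<le> k \<and> 1 \<le> l \<and> x k l = Inl a")
    case True
    then obtain k l a where kl: "1 \<le> k" "1 \<le> l" and xa: "x k l = Inl a" by blast
    have "1 \<le> a" using nhat_carrierD(1)[OF x kl] xa by (auto simp: zmn_carrier_def)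
    then show ?thesis
      using nhat_eq_of_nat_if_Inl_component[OF x kl xa] by (auto simp: nz_carrier_def)
  next
    case False
    then show ?thesis
      using nhat_eq_of_zhat_if_no_Inl_component[OF x] by (auto simp: nz_carrier_def)
  qed
qed

lemma bij_betw_nhat_of_nz: "bij_betw nhat_of_nz nz_carrier nhat_carrier"
  using inj_on_nhat_of_nz nhat_of_nz_in_carrier nhat_carrier_subset_image
  by (auto simp: bij_betw_def)

theorem proposition2p1:
  shows "\<exists>f. bij_betw f nhat_carrier nz_carrier \<and>
           (\<forall>x\<in>nhat_carrier. \<forall>y\<in>nhat_carrier. f (nhat_add x y) = nz_add (f x) (f y))"
proof (intro exI conjI ballI)
  let ?f = "inv_into nz_carrier nhat_of_nz"
  show "bij_betw ?f nhat_carrier nz_carrier"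
    using bij_betw_inv_into[OF bij_betw_nhat_of_nz] .
  have f_inverse: "?f (nhat_of_nz w) = w" if "w \<in> nz_carrier" for w
    using inv_into_f_f[OF inj_on_nhat_of_nz that] .
  fix x y assume "x \<in> nhat_carrier" "y \<in> nhat_carrier"
  then obtain u v where u: "u \<in> nz_carrier" and v: "v \<in> nz_carrier"
    and xy: "x = nhat_of_nz u" "y = nhat_of_nz v"
    using nhat_carrier_subset_image by blast
  show "?f (nhat_add x y) = nz_add (?f x) (?f y)"
    unfolding xy nhat_of_nz_add[symmetric] using f_inverse u v nz_add_closed[OF u v] by simp
qed

end
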